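(* For every $z_0=(x_0,y_0)\in\mathbb Z_+^{n}$ and $k'\in\mathbb Z_+^{m_1}$, \[ P_0\{\tilde Z_0=z_0,\,K'=k'\mid O\}=1_{S_{y-y_0}}(k')\,\frac{P_0\{Z_0=z_0,\,R'(T)=k'\mid O_p\}}{P_0\{R'(T)\in S_{y-Y_0}\mid O_p\}}. \]
   Context: Fix integers $n_1,n_2,m_1,m_2\ge 0$ with $n=n_1+n_2$, $m=m_1+m_2$ and $n_2=m_2$, a time $T>0$, and an observation $y\in\mathbb Z_+^{n_2}$. Let $\nu\in\mathbb Z^{n\times m}$; let $\nu'$ be its first $n_1$ rows and $\nu''$ its last $n_2$ rows, and assume $\nu''=[A\;B]$ with $A\in\mathbb Z^{n_2\times m_1}$ and $B\in\mathbb Z^{m_2\times m_2}$ invertible. For $\Delta y\in\mathbb Z^{n_2}$ and $k'\in\mathbb Z_+^{m_1}$ put $G(\Delta y,k')=B^{-1}(\Delta y-Ak')$ and $S_{\Delta y}=\{k'\in\mathbb Z_+^{m_1}: G(\Delta y,k')\in\mathbb Z_+^{m_2}\}$. Let $\lambda=(\lambda',\lambda''):[0,T]\times\mathbb Z_+^{n}\times\mathbb Z_+^{n_2}\to(0,\infty)^m$ be strictly positive, measurable and integrable in $t$, with $\lambda'$ its first $m_1$ and $\lambda''$ its last $m_2$ components; let $\mu$ be a probability measure on $\mathbb Z_+^n$. An $m$-variate Poisson random variable (resp. inhomogeneous Poisson process) with vector mean (resp. intensity) has independent components with the corresponding component means (intensities). For $(x_0,y_0)\in\mathbb Z_+^n$,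 $\rho(\cdot,x_0,y_0,y)$ denotes the p.m.f. on $\mathbb Z_+^{m_2}$ of an $m_2$-variate Poisson random variable with mean $\int_0^T\lambda''(t,(x_0,y_0),y)\,dt$. Lab process: on a probability space $(\Omega,\mathcal F,P_0)$ let $Z_0=(X_0,Y_0)$ take values in $\mathbb Z_+^{n_1}\times\mathbb Z_+^{n_2}$, let $R=(R',R'')$ ($R'$ with $m_1$, $R''$ with $m_2$ components) be a càdlàg $m$-variate counting process on $[0,T]$ with $R(0)=0$, and set $Z(t)=(X(t),Y(t))=Z_0+\nu R(t)$, so $Y(t)=Y_0+\nu''R(t)$. Let $O_p\in\mathcal F$ with $P_0(O_p)>0$. Under $P_0$: conditioned on $O_p$, $Z_0$ has law $\mu$; conditioned on $O_p\cap\{Z_0=z_0\}$, $R$ is an $m$-variate inhomogeneous Poisson process with intensity $t\mapsto\lambda(t,z_0,y)$. Let $O_y=\{Y(T)=y\}$, $O=O_p\cap O_y$, and assume $P_0(O)>0$. Filter variables: let $(U_{0,i},V_{0,i},K'_i)_{i\in\mathbb N}$ be random variables in $\mathbb Z_+^{n_1}\times\mathbb Z_+^{n_2}\times\mathbb Z_+^{m_1}$ such that, under $P_0$ conditioned on $O_p$, these triples are i.i.d. and independent of $(Z_0,R)$, $(U_{0,i},V_{0,i})$ has law $\mu$, and conditioned additionally on $(U_{0,i},V_{0,i})=(x_0,y_0)$, $K'_i$ is $m_1$-variate Poisson with mean $\int_0^T\lambda'(t,(x_0,y_0),y)\,dt$. Let $N=\min\{i\in\mathbb N: K'_i\in S_{y-V_{0,i}}\}$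 (finite $P_0$-a.s.), and define $K'=K'_N$, $U_0=U_{0,N}$, $V_0=V_{0,N}$, $\tilde Z_0=(U_0,V_0)$, $K''=G(y-V_0,K')$, $K=(K',K'')$, and $W=\rho(K'',U_0,V_0,y)$. *)

theory Defs
  imports "HOL-Probability.Probability" "Jordan_Normal_Form.Gauss_Jordan_Elimination"
begin

definition nnvecs :: "nat \<Rightarrow> int vec set" where
  "nnvecs k = {v. dim_vec v = k \<and> (\<forall>i<k. 0 \<le> v $ i)}"

definition vslice :: "'b vec \<Rightarrow> nat \<Rightarrow> nat \<Rightarrow> 'b vec" where
  "vslice v s l = vec l (\<lambda>i. v $ (s + i))"

definition mslice :: "'b mat \<Rightarrow> nat \<Rightarrow> nat \<Rightarrow> nat \<Rightarrow> nat \<Rightarrow> 'b mat" where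
  "mslice A r0 nr c0 nc = mat nr nc (\<lambda>(i, j). A $$ (r0 + i, c0 + j))"

definition cprob :: "'a measure \<Rightarrow> 'a set \<Rightarrow> 'a set \<Rightarrow> real" where
  "cprob M A C = measure M (A \<inter> C) / measure M C"

definition pois :: "real \<Rightarrow> nat \<Rightarrow> real" where
  "pois a k = a ^ k / fact k * exp (- a)"

definition mpois :: "nat \<Rightarrow> (nat \<Rightarrow> real) \<Rightarrow> int vec \<Rightarrow> real" where
  "mpois d a k = (if k \<in> nnvecs d then (\<Prod>i<d. pois (a i) (nat (k $ i))) else 0)"

definition counting_path :: "nat \<Rightarrow> real \<Rightarrow> (real \<Rightarrow> int vec) \<Rightarrow> bool" where
  "counting_path d T r \<longleftrightarrow> r 0 = 0\<^sub>v d \<and> (\<forall>t\<in>{0..T}. dim_vec (r t) = d) \<and>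
     (\<forall>i<d. mono_on {0..T} (\<lambda>t. r t $ i) \<and>
        (\<forall>t\<in>{0..<T}. \<exists>e>0. \<forall>s\<in>{t..t+e}. r s $ i = r t $ i) \<and>
        (\<forall>t\<in>{0<..T}. \<exists>e>0. \<forall>s\<in>{t-e<..<t}. r t $ i - r s $ i \<le> 1))"

text \<open>Under M conditioned on the event C, R is a d-variate inhomogeneous Poisson process on
  [0,T] with intensity l: R(0)=0 and for all 0 = t_0 <= t_1 <= ... <= t_k <= T the increments
  R(t_j) - R(t_(j-1)) are independent d-variate Poisson variables with means the integrals
  of l over [t_(j-1), t_j].\<close>
definition inhom_poisson ::
  "'a measure \<Rightarrow> 'a set \<Rightarrow> nat \<Rightarrow> real \<Rightarrow> (real \<Rightarrow> 'a \<Rightarrow> int vec) \<Rightarrow> (real \<Rightarrow> nat \<Rightarrow> real) \<Rightarrow> bool"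
  where
  "inhom_poisson M C d T R l \<longleftrightarrow>
     cprob M {\<omega>\<in>space M. R 0 \<omega> = 0\<^sub>v d} C = 1 \<and>
     (\<forall>ts ks. sorted ts \<and> set ts \<subseteq> {0..T} \<and> length ks = length ts \<longrightarrow>
        cprob M {\<omega>\<in>space M. \<forall>j<length ts. R (ts ! j) \<omega> - R ((0 # ts) ! j) \<omega> = ks ! j} C
        = (\<Prod>j<length ts. mpois d (\<lambda>i. LBINT t=(0 # ts) ! j..ts ! j. l t i) (ks ! j)))"

text \<open>The blocks of nu: nu'' = last n2 rows; nu'' = [A B].\<close>
definition nu2 :: "nat \<Rightarrow> nat \<Rightarrow> nat \<Rightarrow> int mat \<Rightarrow> int mat" where
  "nu2 n1 n2 m \<nu> = mslice \<nu> n1 n2 0 m"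

definition Amat :: "nat \<Rightarrow> nat \<Rightarrow> nat \<Rightarrow> int mat \<Rightarrow> int mat" where
  "Amat n1 n2 m1 \<nu> = mslice \<nu> n1 n2 0 m1"

definition Bmat :: "nat \<Rightarrow> nat \<Rightarrow> nat \<Rightarrow> nat \<Rightarrow> int mat \<Rightarrow> int mat" where
  "Bmat n1 n2 m1 m2 \<nu> = mslice \<nu> n1 n2 m1 m2"

definition Gfun :: "nat \<Rightarrow> nat \<Rightarrow> nat \<Rightarrow> nat \<Rightarrow> int mat \<Rightarrow> int vec \<Rightarrow> int vec \<Rightarrow> rat vec" where
  "Gfun n1 n2 m1 m2 \<nu> dy k =
     the (mat_inverse (map_mat rat_of_int (Bmat n1 n2 m1 m2 \<nu>)))
       *\<^sub>v map_vec rat_of_int (dy - Amat n1 n2 m1 \<nu> *\<^sub>v k)"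

definition Sset :: "nat \<Rightarrow> nat \<Rightarrow> nat \<Rightarrow> nat \<Rightarrow> int mat \<Rightarrow> int vec \<Rightarrow> int vec set" where
  "Sset n1 n2 m1 m2 \<nu> dy = {k \<in> nnvecs m1.
     dim_vec (Gfun n1 n2 m1 m2 \<nu> dy k) = m2 \<and>
     (\<forall>i<m2. \<exists>j::nat. Gfun n1 n2 m1 m2 \<nu> dy k $ i = of_nat j)}"

end

theory Submission
  imports Defs
begin


instance vec :: (countable) countable
proof (rule countable_classI[of "\<lambda>v. to_nat (list_of_vec v)"])
  fix v w :: "'a vec"
  assume "to_nat (list_of_vec v) = to_nat (list_of_vec w)"
  then show "v = w" by (metis to_nat_split vec_list)
qed

lemma nnvecs_carrier: "v \<in> nnvecs k \<Longrightarrow> v \<in> carrier_vec k"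
  unfolding nnvecs_def carrier_vec_def by simp

lemma vslice_append_left: "u \<in> carrier_vec n \<Longrightarrow> vslice (u @\<^sub>v v) 0 n = u"
  by (intro eq_vecI) (auto simp: vslice_def)

lemma vslice_append_right: "u \<in> carrier_vec n \<Longrightarrow> v \<in> carrier_vec m \<Longrightarrow> vslice (u @\<^sub>v v) n m = v"
  by (intro eq_vecI) (auto simp: vslice_def)

lemma vslice_append_split: "z \<in> carrier_vec (n + m) \<Longrightarrow> vslice z 0 n @\<^sub>v vslice z n m = z"
  using vec_first_last_append[of z n m] by (simp add: vslice_def vec_first_def vec_last_def)

lemma append_mem_nnvecs_iff:
  assumes "u \<in> carrier_vec n"
  shows "u @\<^sub>v v \<in> nnvecs (n + m) \<longleftrightarrow> u \<in> nnvecs n \<and> v \<in> nnvecs m"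
proof
  have du: "dim_vec u = n" using assms by auto
  assume uv: "u @\<^sub>v v \<in> nnvecs (n + m)"
  then have dv: "dim_vec v = m" by (simp add: nnvecs_def du)
  have nn: "0 \<le> (u @\<^sub>v v) $ i" if "i < n + m" for i
    using uv that unfolding nnvecs_def by blast
  have "0 \<le> u $ i" if "i < n" for i using nn[of i] that du dv by simp
  moreover have "0 \<le> v $ i" if "i < m" for i using nn[of "n + i"] that du dv by simp
  ultimately show "u \<in> nnvecs n \<and> v \<in> nnvecs m" using du dv by (simp add: nnvecs_def)
next
  assume "u \<in> nnvecs n \<and> v \<in> nnvecs m"
  then show "u @\<^sub>v v \<in> nnvecs (n + m)" by (auto simp: nnvecs_def)
qed

lemma vslice_mem_nnvecs: "z \<in> nnvecs (n + m) \<Longrightarrow> vslice z 0 n \<in> nnvecs n \<and> vslice z n m \<in> nnvecs m"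
  by (simp add: nnvecs_def vslice_def)

lemma bij_betw_append_nnvecs:
  "bij_betw (\<lambda>(u, v). u @\<^sub>v v) (nnvecs n \<times> nnvecs m) (nnvecs (n + m))"
proof (rule bij_betwI[where g = "\<lambda>z. (vslice z 0 n, vslice z n m)"])
  show "(\<lambda>(u, v). u @\<^sub>v v) \<in> nnvecs n \<times> nnvecs m \<rightarrow> nnvecs (n + m)"
    using append_mem_nnvecs_iff nnvecs_carrier by auto
  show "(\<lambda>z. (vslice z 0 n, vslice z n m)) \<in> nnvecs (n + m) \<rightarrow> nnvecs n \<times> nnvecs m"
    using vslice_mem_nnvecs by auto
qed (auto simp: vslice_append_left vslice_append_right vslice_append_split nnvecs_carrier)

lemma mpois_eq_0: "v \<notin> nnvecs d \<Longrightarrow> mpois d a v = 0"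
  by (simp add: mpois_def)

lemma mpois_nonneg: "(\<And>i. i < d \<Longrightarrow> 0 \<le> a i) \<Longrightarrow> 0 \<le> mpois d a v"
  by (auto simp: mpois_def pois_def intro!: prod_nonneg)

lemma mpois_append:
  assumes u: "u \<in> nnvecs n" and v: "v \<in> nnvecs m"
  shows "mpois (n + m) a (u @\<^sub>v v) = mpois n a u * mpois m (\<lambda>i. a (n + i)) v"
proof -
  have du: "dim_vec u = n" and dv: "dim_vec v = m" using u v by (auto simp: nnvecs_def)
  have "u @\<^sub>v v \<in> nnvecs (n + m)" using u v append_mem_nnvecs_iff nnvecs_carrier by blast
  then have "mpois (n + m) a (u @\<^sub>v v) = (\<Prod>i<n + m. pois (a i) (nat ((u @\<^sub>v v) $ i)))"
    by (simp add: mpois_def)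
  also have "\<dots> = (\<Prod>i<n. pois (a i) (nat ((u @\<^sub>v v) $ i))) * (\<Prod>i\<in>{n..<n + m}. pois (a i) (nat ((u @\<^sub>v v) $ i)))"
    by (simp add: lessThan_atLeast0 prod.atLeastLessThan_concat)
  also have "\<dots> = (\<Prod>i<n. pois (a i) (nat (u $ i))) * (\<Prod>i\<in>{n..<n + m}. pois (a i) (nat (v $ (i - n))))"
    by (intro arg_cong2[where f = "(*)"] prod.cong) (auto simp: du dv)
  also have "(\<Prod>i\<in>{n..<n + m}. pois (a i) (nat (v $ (i - n)))) = (\<Prod>i<m. pois (a (n + i)) (nat (v $ i)))"
    by (rule prod.reindex_bij_witness[where i = "\<lambda>i. n + i" and j = "\<lambda>i. i - n"]) auto
  finally show ?thesis using u v by (simp add: mpois_def)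
qed

lemma nn_integral_count_space_nnvecs:
  assumes "\<And>v. v \<notin> nnvecs d \<Longrightarrow> f v = 0"
  shows "(\<integral>\<^sup>+v. f v \<partial>count_space UNIV) = (\<integral>\<^sup>+v. f v \<partial>count_space (nnvecs d))"
  by (auto simp: nn_integral_count_space_indicator assms split: split_indicator intro!: nn_integral_cong)

lemma nn_integral_pois: "0 \<le> r \<Longrightarrow> (\<integral>\<^sup>+n. ennreal (pois r n) \<partial>count_space UNIV) = 1"
proof (cases "r = 0")
  case True
  then have "(\<lambda>n. ennreal (pois r n)) = indicator {0}"
    by (auto simp: pois_def fun_eq_iff split: split_indicator)
  then show ?thesis by simp
next
  case False
  assume "0 \<le> r"
  with False have "(\<lambda>n. ennreal (pois r n)) = (\<lambda>n. ennreal (pmf (poisson_pmf r) n))"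
    by (simp add: pmf_poisson pois_def)
  then show ?thesis by (simp add: nn_integral_pmf_eq_1)
qed

lemma nn_integral_mpois_1:
  assumes "0 \<le> a 0"
  shows "(\<integral>\<^sup>+v. mpois 1 a v \<partial>count_space UNIV) = 1"
proof -
  have bij: "bij_betw (\<lambda>n. vec 1 (\<lambda>_. int n)) UNIV (nnvecs 1)"
  proof (rule bij_betwI[where g = "\<lambda>v :: int vec. nat (v $ 0)"])
    fix v :: "int vec" assume "v \<in> nnvecs 1"
    then show "vec 1 (\<lambda>_. int (nat (v $ 0))) = v"
      by (intro eq_vecI) (auto simp: nnvecs_def)
  qed (auto simp: nnvecs_def)
  have "(\<integral>\<^sup>+v. mpois 1 a v \<partial>count_space UNIV) = (\<integral>\<^sup>+v. mpois 1 a v \<partial>count_space (nnvecs 1))"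
    by (rule nn_integral_count_space_nnvecs) (simp add: mpois_eq_0)
  also have "\<dots> = (\<integral>\<^sup>+n. pois (a 0) n \<partial>count_space UNIV)"
    by (subst nn_integral_bij_count_space[OF bij, symmetric]) (simp add: mpois_def nnvecs_def)
  finally show ?thesis using nn_integral_pois[OF assms] by simp
qed

lemma nn_integral_mpois:
  "(\<And>i. i < d \<Longrightarrow> 0 \<le> a i) \<Longrightarrow> (\<integral>\<^sup>+v. mpois d a v \<partial>count_space UNIV) = 1"
proof (induction d arbitrary: a)
  case 0
  have "(\<lambda>v. ennreal (mpois 0 a v)) = indicator {vNil}"
    by (auto simp: fun_eq_iff mpois_def nnvecs_def split: split_indicator)
  then show ?case by simp
next
  case (Suc d)
  let ?b = "\<lambda>i. a (d + i)"
  have "(\<integral>\<^sup>+v. mpois (d + 1) a v \<partial>count_space UNIV)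
      = (\<integral>\<^sup>+v. mpois (d + 1) a v \<partial>count_space (nnvecs (d + 1)))"
    by (rule nn_integral_count_space_nnvecs) (simp add: mpois_eq_0)
  also have "\<dots> = (\<integral>\<^sup>+p. mpois d a (fst p) * mpois 1 ?b (snd p) \<partial>count_space (nnvecs d \<times> nnvecs 1))"
  proof (subst nn_integral_bij_count_space[OF bij_betw_append_nnvecs, symmetric], rule nn_integral_cong)
    fix p assume "p \<in> space (count_space (nnvecs d \<times> nnvecs 1))"
    then show "ennreal (mpois (d + 1) a (case p of (u, v) \<Rightarrow> u @\<^sub>v v))
        = ennreal (mpois d a (fst p) * mpois 1 ?b (snd p))"
      using mpois_append[of "fst p" d "snd p" 1 a] by (simp add: case_prod_beta mem_Times_iff)
  qed
  also have "\<dots> = (\<integral>\<^sup>+p. ennreal (mpois d a (fst p)) * ennreal (mpois 1 ?b (snd p)) \<partial>count_space UNIV)"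
    by (auto simp: nn_integral_count_space_indicator mpois_eq_0 ennreal_mult' mpois_nonneg Suc.prems
             split: split_indicator intro!: nn_integral_cong)
  also have "\<dots> = (\<integral>\<^sup>+u. mpois d a u \<partial>count_space UNIV) * (\<integral>\<^sup>+v. mpois 1 ?b v \<partial>count_space UNIV)"
    by (simp add: nn_integral_fst_count_space[symmetric] nn_integral_cmult nn_integral_multc)
  also have "\<dots> = 1"
    using Suc.IH[of a] nn_integral_mpois_1[of ?b] Suc.prems by simp
  finally show ?case by simp
qed

lemma nn_integral_mpois_marginal:
  assumes u: "u \<in> nnvecs n" and a: "\<And>i. i < n + m \<Longrightarrow> 0 \<le> a i"
  shows "(\<integral>\<^sup>+w. mpois (n + m) a (u @\<^sub>v w) \<partial>count_space UNIV) = mpois n a u"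
proof -
  have "mpois (n + m) a (u @\<^sub>v w) = mpois n a u * mpois m (\<lambda>i. a (n + i)) w" for w
  proof (cases "w \<in> nnvecs m")
    case True
    then show ?thesis by (rule mpois_append[OF u])
  next
    case False
    then show ?thesis using append_mem_nnvecs_iff[OF nnvecs_carrier[OF u]] by (simp add: mpois_eq_0)
  qed
  moreover have "0 \<le> mpois n a u" by (rule mpois_nonneg) (simp add: a)
  ultimately have "(\<integral>\<^sup>+w. mpois (n + m) a (u @\<^sub>v w) \<partial>count_space UNIV)
      = (\<integral>\<^sup>+w. ennreal (mpois n a u) * mpois m (\<lambda>i. a (n + i)) w \<partial>count_space UNIV)"
    by (simp add: ennreal_mult')
  also have "\<dots> = ennreal (mpois n a u) * (\<integral>\<^sup>+w. mpois m (\<lambda>i. a (n + i)) w \<partial>count_space UNIV)"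
    by (rule nn_integral_cmult) simp
  also have "(\<integral>\<^sup>+w. mpois m (\<lambda>i. a (n + i)) w \<partial>count_space UNIV) = 1"
    by (rule nn_integral_mpois) (simp add: a)
  finally show ?thesis by simp
qed



lemma mat_inverse_of_invertible:
  fixes A :: "'a :: field mat"
  assumes inv: "invertible_mat A" and A: "A \<in> carrier_mat n n"
  obtains B where "mat_inverse A = Some B" "B * A = 1\<^sub>m n" "B \<in> carrier_mat n n"
proof -
  obtain B where AB: "A * B = 1\<^sub>m n" and BA: "B * A = 1\<^sub>m (dim_row B)"
    using inv A unfolding invertible_mat_def inverts_mat_def by auto
  have "dim_col B = n" "dim_row B = n"
    using arg_cong[OF AB, of dim_col] arg_cong[OF BA, of dim_col] A by auto
  then have "A \<in> Units (ring_mat TYPE('a) n ())"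
    using A AB BA by (auto simp: Units_def ring_mat_def)
  then obtain B' where "mat_inverse A = Some B'"
    using mat_inverse(1)[OF A, of "()"] by (cases "mat_inverse A") auto
  with mat_inverse(2)[OF A this] show ?thesis using that by blast
qed

lemma row_nu2:
  "i < n2 \<Longrightarrow> row (nu2 n1 n2 (m1 + m2) \<nu>) i = row (Amat n1 n2 m1 \<nu>) i @\<^sub>v row (Bmat n1 n2 m1 m2 \<nu>) i"
  by (intro eq_vecI) (auto simp: nu2_def Amat_def Bmat_def mslice_def)

lemma nu2_mult_vec:
  assumes r: "r \<in> carrier_vec (m1 + m2)"
  shows "nu2 n1 n2 (m1 + m2) \<nu> *\<^sub>v r
    = Amat n1 n2 m1 \<nu> *\<^sub>v vslice r 0 m1 + Bmat n1 n2 m1 m2 \<nu> *\<^sub>v vslice r m1 m2"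
proof (rule eq_vecI)
  fix i assume "i < dim_vec (Amat n1 n2 m1 \<nu> *\<^sub>v vslice r 0 m1 + Bmat n1 n2 m1 m2 \<nu> *\<^sub>v vslice r m1 m2)"
  then have i: "i < n2" by (simp add: Bmat_def mslice_def)
  have "(nu2 n1 n2 (m1 + m2) \<nu> *\<^sub>v r) $ i
      = row (nu2 n1 n2 (m1 + m2) \<nu>) i \<bullet> (vslice r 0 m1 @\<^sub>v vslice r m1 m2)"
    using i vslice_append_split[OF r] by (simp add: nu2_def mslice_def)
  also have "\<dots> = row (Amat n1 n2 m1 \<nu>) i \<bullet> vslice r 0 m1 + row (Bmat n1 n2 m1 m2 \<nu>) i \<bullet> vslice r m1 m2"
    unfolding row_nu2[OF i]
    by (rule scalar_prod_append) (auto simp: Amat_def Bmat_def mslice_def vslice_def intro!: carrier_vecI)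
  finally show "(nu2 n1 n2 (m1 + m2) \<nu> *\<^sub>v r) $ i
    = (Amat n1 n2 m1 \<nu> *\<^sub>v vslice r 0 m1 + Bmat n1 n2 m1 m2 \<nu> *\<^sub>v vslice r m1 m2) $ i"
    using i by (simp add: Amat_def Bmat_def mslice_def)
qed (simp add: nu2_def Amat_def Bmat_def mslice_def)

lemma Gfun_nu2_mult:
  assumes dims: "n2 = m2" and B_inv: "invertible_mat (map_mat rat_of_int (Bmat n1 n2 m1 m2 \<nu>))"
    and r: "r \<in> carrier_vec (m1 + m2)"
  shows "Gfun n1 n2 m1 m2 \<nu> (nu2 n1 n2 (m1 + m2) \<nu> *\<^sub>v r) (vslice r 0 m1) = map_vec rat_of_int (vslice r m1 m2)"
proof -
  let ?A = "Amat n1 n2 m1 \<nu>" and ?B = "Bmat n1 n2 m1 m2 \<nu>"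
  let ?r1 = "vslice r 0 m1" and ?r2 = "vslice r m1 m2"
  have B: "?B \<in> carrier_mat m2 m2" using dims by (simp add: Bmat_def mslice_def)
  have r2: "?r2 \<in> carrier_vec m2" by (simp add: vslice_def)
  obtain Bi where Bi: "mat_inverse (map_mat rat_of_int ?B) = Some Bi" "Bi * map_mat rat_of_int ?B = 1\<^sub>m m2"
    and Bi_carrier: "Bi \<in> carrier_mat m2 m2"
    using mat_inverse_of_invertible[OF B_inv] B by auto
  have "nu2 n1 n2 (m1 + m2) \<nu> *\<^sub>v r - ?A *\<^sub>v ?r1 = ?B *\<^sub>v ?r2"
    unfolding nu2_mult_vec[OF r] using dims by (intro eq_vecI) (auto simp: Amat_def Bmat_def mslice_def)
  then have "Gfun n1 n2 m1 m2 \<nu> (nu2 n1 n2 (m1 + m2) \<nu> *\<^sub>v r) ?r1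
      = Bi *\<^sub>v map_vec rat_of_int (?B *\<^sub>v ?r2)"
    using Bi(1) by (simp add: Gfun_def)
  also have "\<dots> = Bi *\<^sub>v (map_mat rat_of_int ?B *\<^sub>v map_vec rat_of_int ?r2)"
    by (simp only: of_int_hom.mult_mat_vec_hom[OF B r2])
  also have "\<dots> = map_vec rat_of_int ?r2"
    using Bi_carrier B r2 Bi(2) by (simp flip: assoc_mult_mat_vec)
  finally show ?thesis .
qed

lemma vslice_mem_Sset:
  assumes dims: "n2 = m2" and B_inv: "invertible_mat (map_mat rat_of_int (Bmat n1 n2 m1 m2 \<nu>))"
    and r: "r \<in> nnvecs (m1 + m2)"
  shows "vslice r 0 m1 \<in> Sset n1 n2 m1 m2 \<nu> (nu2 n1 n2 (m1 + m2) \<nu> *\<^sub>v r)"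
proof -
  have r12: "vslice r 0 m1 \<in> nnvecs m1" "vslice r m1 m2 \<in> nnvecs m2"
    using vslice_mem_nnvecs[OF r] by auto
  have "\<exists>j::nat. map_vec rat_of_int (vslice r m1 m2) $ i = of_nat j" if "i < m2" for i
    using r12(2) that by (intro exI[of _ "nat (vslice r m1 m2 $ i)"]) (simp add: nnvecs_def)
  then show ?thesis
    using r12(1) Gfun_nu2_mult[OF dims B_inv nnvecs_carrier[OF r]] by (simp add: Sset_def vslice_def)
qed



lemma sets_Collect_count_space:
  "X \<in> M \<rightarrow>\<^sub>M count_space UNIV \<Longrightarrow> {\<omega>\<in>space M. P (X \<omega>)} \<in> sets M"
  using measurable_sets[of X M "count_space UNIV" "Collect P"] by (simp add: vimage_def Int_def conj_commute)

lemma (in prob_space) prob_indep_Int: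
  fixes X :: "nat \<Rightarrow> 'a \<Rightarrow> 'b"
  assumes indep: "indep_sets (\<lambda>j. case j of
        Some i \<Rightarrow> sets (vimage_algebra (space M) (X i) (count_space UNIV)) | None \<Rightarrow> G) UNIV"
    and Q: "Q \<in> G" and I: "finite I"
  shows "prob ({\<omega>\<in>space M. \<forall>i\<in>I. X i \<omega> \<in> B i} \<inter> Q)
    = (\<Prod>i\<in>I. prob {\<omega>\<in>space M. X i \<omega> \<in> B i}) * prob Q"
proof -
  have Q_ev: "Q \<in> events"
    using indep Q unfolding indep_sets_def by (metis UNIV_I option.simps(4) subsetD)
  define A where "A j = (case j of None \<Rightarrow> Q | Some i \<Rightarrow> X i -` B i \<inter> space M)" for j
  have "prob (\<Inter>j\<in>insert None (Some ` I). A j) = (\<Prod>j\<in>insert None (Some ` I). prob (A j))"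
    using Q I by (intro indep_setsD[OF indep]) (auto simp: A_def intro!: in_vimage_algebra)
  moreover have "(\<Inter>j\<in>insert None (Some ` I). A j) = {\<omega>\<in>space M. \<forall>i\<in>I. X i \<omega> \<in> B i} \<inter> Q"
    using Q_ev by (auto simp: A_def)
  ultimately show ?thesis
    using I by (simp add: A_def prod.reindex vimage_def Int_def conj_commute mult.commute)
qed


lemma sets_first_hit:
  fixes X :: "nat \<Rightarrow> 'a \<Rightarrow> 'b :: countable"
  assumes X: "\<And>i. X i \<in> M \<rightarrow>\<^sub>M count_space UNIV"
  shows "{\<omega>\<in>space M. X (LEAST i. X i \<omega> \<in> S) \<omega> \<in> F} \<in> sets M"
proof -
  have "(\<lambda>\<omega>. X (LEAST i. X i \<omega> \<in> S) \<omega>) \<in> M \<rightarrow>\<^sub>M count_space UNIV"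
    by (intro measurable_compose_countable[OF X] measurable_Least
        measurable_compose[OF X measurable_count_space])
  then show ?thesis by (rule sets_Collect_count_space)
qed

lemma (in prob_space) prob_first_hit_Int:
  fixes X :: "nat \<Rightarrow> 'a \<Rightarrow> 'b :: countable"
  assumes X: "\<And>i. X i \<in> M \<rightarrow>\<^sub>M count_space UNIV"
    and indep: "indep_sets (\<lambda>j. case j of
        Some i \<Rightarrow> sets (vimage_algebra (space M) (X i) (count_space UNIV)) | None \<Rightarrow> G) UNIV"
    and Q: "Q \<in> G"
    and hit: "\<And>i. prob {\<omega>\<in>space M. X i \<omega> \<in> S} = D" and D_pos: "0 < D"
    and hit_in: "\<And>i. prob {\<omega>\<in>space M. X i \<omega> \<in> S \<inter> F} = p"
  shows "prob ({\<omega>\<in>space M. X (LEAST i. X i \<omega> \<in> S) \<omega> \<in> F} \<inter> Q) = p * prob Q / D"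
proof -
  have Q_ev: "Q \<in> events"
    using indep Q unfolding indep_sets_def by (metis UNIV_I option.simps(4) subsetD)
  have miss: "prob {\<omega>\<in>space M. X i \<omega> \<notin> S} = 1 - D" for i
  proof -
    have "{\<omega>\<in>space M. X i \<omega> \<notin> S} = space M - {\<omega>\<in>space M. X i \<omega> \<in> S}" by auto
    then show ?thesis
      using prob_compl[OF sets_Collect_count_space[OF X[of i], of "\<lambda>x. x \<in> S"]] hit[of i] by simp
  qed
  have D_le: "D \<le> 1" using hit[of 0] by auto
  define first where "first n = {\<omega>\<in>space M. \<forall>i\<in>{..n}. X i \<omega> \<in> (if i < n then - S else S \<inter> F)}" for n
  define never where "never = {\<omega>\<in>space M. \<forall>i. X i \<omega> \<notin> S}"
  define hitF where "hitF = {\<omega>\<in>space M. X (LEAST i. X i \<omega> \<in> S) \<omega> \<in> F}"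
  have first_ev: "first n \<in> events" for n
    unfolding first_def by (intro sets.sets_Collect_finite_All sets_Collect_count_space[OF X]) auto
  have never_ev: "never \<in> events"
    unfolding never_def by (intro sets.sets_Collect_countable_All sets_Collect_count_space[OF X])
  have hitF_ev: "hitF \<in> events"
    unfolding hitF_def by (rule sets_first_hit[OF X])
  have prob_first: "prob (first n \<inter> Q) = (1 - D) ^ n * p * prob Q" for n
  proof -
    let ?f = "\<lambda>i. prob {\<omega>\<in>space M. X i \<omega> \<in> (if i < n then - S else S \<inter> F)}"
    have "prob (first n \<inter> Q) = (\<Prod>i\<in>{..n}. ?f i) * prob Q"
      unfolding first_def by (rule prob_indep_Int[OF indep Q]) simp
    also have "(\<Prod>i\<in>{..n}. ?f i) = (\<Prod>i<n. ?f i) * ?f n"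
      by (simp flip: lessThan_Suc_atMost)
    also have "(\<Prod>i<n. ?f i) = (\<Prod>i<n. 1 - D)"
      by (rule prod.cong) (simp_all add: miss)
    also have "?f n = p" using hit_in by simp
    finally show ?thesis by simp
  qed
  have never_null: "prob (never \<inter> Q) = 0"
  proof -
    have "prob (never \<inter> Q) \<le> (1 - D) ^ n * prob Q" for n
    proof -
      have "prob (never \<inter> Q) \<le> prob ({\<omega>\<in>space M. \<forall>i\<in>{..<n}. X i \<omega> \<in> - S} \<inter> Q)"
        using Q_ev by (intro finite_measure_mono sets.Int sets.sets_Collect_finite_All
            sets_Collect_count_space[OF X]) (auto simp: never_def)
      also have "\<dots> = (1 - D) ^ n * prob Q"
        using prob_indep_Int[OF indep Q, of "{..<n}" "\<lambda>_. - S"] by (simp add: miss)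
      finally show ?thesis .
    qed
    moreover have "(\<lambda>n. (1 - D) ^ n * prob Q) \<longlonglongrightarrow> 0 * prob Q"
      using D_pos D_le by (intro tendsto_mult LIMSEQ_power_zero tendsto_const) auto
    ultimately have "prob (never \<inter> Q) \<le> 0"
      by (intro LIMSEQ_le_const[of _ 0]) auto
    then show ?thesis using measure_nonneg[of M "never \<inter> Q"] by linarith
  qed
  have first_iff: "\<omega> \<in> first n \<longleftrightarrow> \<omega> \<in> space M \<and> (\<forall>i<n. X i \<omega> \<notin> S) \<and> X n \<omega> \<in> S \<inter> F"
    for \<omega> n by (auto simp: first_def)
  have first_disj: "disjoint_family (\<lambda>n. first n \<inter> Q)"
    unfolding disjoint_family_on_def
  proof (intro ballI impI)
    fix n m :: nat assume "n \<noteq> m"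
    then show "(first n \<inter> Q) \<inter> (first m \<inter> Q) = {}"
      by (cases n m rule: linorder_cases) (auto simp: first_iff)
  qed
  have "(\<lambda>n. prob (first n \<inter> Q)) sums prob (\<Union>n. first n \<inter> Q)"
    using first_ev Q_ev first_disj by (intro finite_measure_UNION) auto
  moreover have "(\<lambda>n. prob (first n \<inter> Q)) sums (p * prob Q / D)"
  proof -
    have "(\<lambda>n. (1 - D) ^ n) sums (1 / D)" using geometric_sums[of "1 - D"] D_pos D_le by simp
    from sums_mult2[OF this, of "p * prob Q"] show ?thesis by (simp add: prob_first mult_ac)
  qed
  ultimately have prob_Un: "prob (\<Union>n. first n \<inter> Q) = p * prob Q / D"
    by (rule sums_unique2)
  have first_sub: "(\<Union>n. first n \<inter> Q) \<subseteq> hitF \<inter> Q"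
  proof safe
    fix n \<omega> assume "\<omega> \<in> first n" "\<omega> \<in> Q"
    then have "(LEAST i. X i \<omega> \<in> S) = n" "\<omega> \<in> space M" "X n \<omega> \<in> F"
      by (auto simp: first_iff intro!: Least_equality leI)
    then show "\<omega> \<in> hitF" by (simp add: hitF_def)
  qed
  have hitF_sub: "hitF \<inter> Q \<subseteq> (\<Union>n. first n \<inter> Q) \<union> (never \<inter> Q)"
  proof
    fix \<omega> assume \<omega>: "\<omega> \<in> hitF \<inter> Q"
    show "\<omega> \<in> (\<Union>n. first n \<inter> Q) \<union> (never \<inter> Q)"
    proof (cases "\<exists>j. X j \<omega> \<in> S")
      case True
      then have "\<omega> \<in> first (LEAST i. X i \<omega> \<in> S)"
        using \<omega> by (auto simp: first_iff hitF_def dest: not_less_Least intro: LeastI)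
      then show ?thesis using \<omega> by blast
    next
      case False
      then show ?thesis using \<omega> by (auto simp: never_def hitF_def)
    qed
  qed
  have "prob (\<Union>n. first n \<inter> Q) \<le> prob (hitF \<inter> Q)"
    using first_sub hitF_ev Q_ev by (intro finite_measure_mono) auto
  moreover have "prob (hitF \<inter> Q) \<le> prob (\<Union>n. first n \<inter> Q) + prob (never \<inter> Q)"
    using hitF_sub first_ev never_ev Q_ev
    by (intro order.trans[OF finite_measure_mono measure_Un_le]) auto
  ultimately have "prob (hitF \<inter> Q) = prob (\<Union>n. first n \<inter> Q)"
    using never_null by linarith
  then show ?thesis using prob_Un unfolding hitF_def by simp
qed



lemma counting_path_endpoints:
  assumes "counting_path d T r" "0 \<le> T"
  shows "r 0 = 0\<^sub>v d" "r T \<in> nnvecs d"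
proof -
  show r0: "r 0 = 0\<^sub>v d" using assms(1) by (simp add: counting_path_def)
  have "0 \<le> r T $ i" if i: "i < d" for i
  proof -
    have "mono_on {0..T} (\<lambda>t. r t $ i)" using assms(1) i by (simp add: counting_path_def)
    then have "r 0 $ i \<le> r T $ i" using assms(2) by (auto intro: mono_onD)
    then show ?thesis using r0 i by simp
  qed
  moreover have "dim_vec (r T) = d" using assms by (simp add: counting_path_def)
  ultimately show "r T \<in> nnvecs d" by (simp add: nnvecs_def)
qed

lemma cprob_Int_eq_mult:
  assumes M: "finite_measure M" and sets: "A \<in> sets M" "B \<in> sets M" "C \<in> sets M"
    and C: "0 < measure M C" and pA: "cprob M A C = p"
    and pB: "0 < measure M (C \<inter> A) \<Longrightarrow> cprob M B (C \<inter> A) = q"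
  shows "cprob M (A \<inter> B) C = p * q"
proof (cases "measure M (C \<inter> A) = 0")
  case True
  have "measure M (A \<inter> B \<inter> C) \<le> measure M (C \<inter> A)"
    using sets by (intro finite_measure.finite_measure_mono[OF M]) auto
  then have "measure M (A \<inter> B \<inter> C) = 0" using True measure_nonneg[of M] by (simp add: antisym)
  moreover have "p = 0" using pA True by (simp add: cprob_def Int_commute)
  ultimately show ?thesis by (simp add: cprob_def)
next
  case False
  then have "measure M (B \<inter> (C \<inter> A)) = q * measure M (C \<inter> A)"
    using pB measure_nonneg[of M "C \<inter> A"] by (simp add: cprob_def field_simps)
  moreover have "B \<inter> (C \<inter> A) = A \<inter> B \<inter> C" "C \<inter> A = A \<inter> C" by auto
  ultimately show ?thesis using pA C by (simp add: cprob_def field_simps)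
qed

lemma inhom_poisson_cprob_endpoint:
  assumes ip: "inhom_poisson M C d T R l" and T: "0 \<le> T"
    and R0: "\<And>\<omega>. \<omega> \<in> space M \<Longrightarrow> R 0 \<omega> = 0\<^sub>v d"
    and RT: "\<And>\<omega>. \<omega> \<in> space M \<Longrightarrow> R T \<omega> \<in> carrier_vec d"
  shows "cprob M {\<omega>\<in>space M. R T \<omega> = K} C = mpois d (\<lambda>i. LBINT t=0..T. l t i) K"
proof -
  have "cprob M {\<omega>\<in>space M. \<forall>j<length [T]. R ([T] ! j) \<omega> - R ((0 # [T]) ! j) \<omega> = [K] ! j} C
      = (\<Prod>j<length [T]. mpois d (\<lambda>i. LBINT t=(0 # [T]) ! j..[T] ! j. l t i) ([K] ! j))"
    using ip[unfolded inhom_poisson_def, THEN conjunct2, rule_format, of "[T]" "[K]"] T by simp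
  moreover have "{\<omega>\<in>space M. \<forall>j<length [T]. R ([T] ! j) \<omega> - R ((0 # [T]) ! j) \<omega> = [K] ! j}
      = {\<omega>\<in>space M. R T \<omega> = K}"
    using R0 RT by auto
  ultimately show ?thesis by (simp add: zero_ereal_def)
qed


lemma (in finite_measure) cprob_vslice_endpoint:
  assumes C: "C \<in> sets M" "0 < measure M C"
    and ip: "inhom_poisson M C (m1 + m2) T R l" and T: "0 \<le> T"
    and RT_meas: "R T \<in> M \<rightarrow>\<^sub>M count_space UNIV"
    and R0: "\<And>\<omega>. \<omega> \<in> space M \<Longrightarrow> R 0 \<omega> = 0\<^sub>v (m1 + m2)"
    and RT: "\<And>\<omega>. \<omega> \<in> space M \<Longrightarrow> R T \<omega> \<in> nnvecs (m1 + m2)"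
    and l: "\<And>i. i < m1 + m2 \<Longrightarrow> 0 \<le> (LBINT t=0..T. l t i)"
  shows "cprob M {\<omega>\<in>space M. vslice (R T \<omega>) 0 m1 = k} C = mpois m1 (\<lambda>i. LBINT t=0..T. l t i) k"
proof (cases "k \<in> nnvecs m1")
  case False
  then have empty: "{\<omega>\<in>space M. vslice (R T \<omega>) 0 m1 = k} \<inter> C = {}"
    using RT vslice_mem_nnvecs by blast
  show ?thesis unfolding cprob_def empty using False by (simp add: mpois_eq_0)
next
  case True
  let ?a = "\<lambda>i. LBINT t=0..T. l t i"
  let ?E = "\<lambda>w. {\<omega>\<in>space M. R T \<omega> = k @\<^sub>v w} \<inter> C"
  have k: "k \<in> carrier_vec m1" using True by (rule nnvecs_carrier)
  have point: "measure M (?E w) = mpois (m1 + m2) ?a (k @\<^sub>v w) * measure M C" for w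
    using inhom_poisson_cprob_endpoint[OF ip T R0 nnvecs_carrier[OF RT]] C
    by (simp add: cprob_def field_simps)
  have split: "{\<omega>\<in>space M. vslice (R T \<omega>) 0 m1 = k} \<inter> C = (\<Union>w. ?E w)"
  proof (intro equalityI subsetI)
    fix \<omega> assume "\<omega> \<in> {\<omega>\<in>space M. vslice (R T \<omega>) 0 m1 = k} \<inter> C"
    then show "\<omega> \<in> (\<Union>w. ?E w)"
      using vslice_append_split[OF nnvecs_carrier[OF RT]] by auto metis
  qed (auto simp: vslice_append_left[OF k])
  have disj: "disjoint_family ?E"
    unfolding disjoint_family_on_def using append_vec_eq[OF k k] by auto
  have "emeasure M ({\<omega>\<in>space M. vslice (R T \<omega>) 0 m1 = k} \<inter> C)
      = (\<integral>\<^sup>+w. emeasure M (?E w) \<partial>count_space UNIV)"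
    unfolding split
    using C disj sets_Collect_count_space[OF RT_meas] by (intro emeasure_UN_countable) auto
  also have "\<dots> = (\<integral>\<^sup>+w. ennreal (mpois (m1 + m2) ?a (k @\<^sub>v w)) * measure M C \<partial>count_space UNIV)"
    using l by (simp add: emeasure_eq_measure point ennreal_mult' mpois_nonneg)
  also have "\<dots> = ennreal (mpois m1 ?a k) * measure M C"
    using nn_integral_mpois_marginal[OF True l] by (simp add: nn_integral_multc)
  finally have "ennreal (measure M ({\<omega>\<in>space M. vslice (R T \<omega>) 0 m1 = k} \<inter> C))
      = ennreal (mpois m1 ?a k * measure M C)"
    using l by (simp add: emeasure_eq_measure ennreal_mult' mpois_nonneg)
  then have "measure M ({\<omega>\<in>space M. vslice (R T \<omega>) 0 m1 = k} \<inter> C) = mpois m1 ?a k * measure M C"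
    using l by (subst (asm) ennreal_inj) (auto intro!: mpois_nonneg mult_nonneg_nonneg)
  then show ?thesis using C by (simp add: cprob_def)
qed

lemma (in finite_measure) cprob_initial_and_partial_count:
  assumes Op: "Op \<in> sets M" "0 < measure M Op"
    and Z0: "Z0 \<in> M \<rightarrow>\<^sub>M count_space UNIV" and RT_meas: "R T \<in> M \<rightarrow>\<^sub>M count_space UNIV"
    and T: "0 \<le> T"
    and R0: "\<And>\<omega>. \<omega> \<in> space M \<Longrightarrow> R 0 \<omega> = 0\<^sub>v (m1 + m2)"
    and RT: "\<And>\<omega>. \<omega> \<in> space M \<Longrightarrow> R T \<omega> \<in> nnvecs (m1 + m2)"
    and Z0_law: "cprob M {\<omega>\<in>space M. Z0 \<omega> = z} Op = pmf \<mu> z"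
    and R_law: "0 < measure M (Op \<inter> {\<omega>\<in>space M. Z0 \<omega> = z}) \<Longrightarrow>
      inhom_poisson M (Op \<inter> {\<omega>\<in>space M. Z0 \<omega> = z}) (m1 + m2) T R (l z)"
    and l: "\<And>i. z \<in> set_pmf \<mu> \<Longrightarrow> i < m1 + m2 \<Longrightarrow> 0 \<le> (LBINT t=0..T. l z t i)"
  shows "cprob M {\<omega>\<in>space M. Z0 \<omega> = z \<and> vslice (R T \<omega>) 0 m1 = k} Op
    = pmf \<mu> z * mpois m1 (\<lambda>i. LBINT t=0..T. l z t i) k"
proof -
  let ?A = "{\<omega>\<in>space M. Z0 \<omega> = z}"
  have A: "?A \<in> sets M" by (rule sets_Collect_count_space[OF Z0])
  have "cprob M (?A \<inter> {\<omega>\<in>space M. vslice (R T \<omega>) 0 m1 = k}) Op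
      = pmf \<mu> z * mpois m1 (\<lambda>i. LBINT t=0..T. l z t i) k"
  proof (rule cprob_Int_eq_mult[OF finite_measure_axioms A _ Op Z0_law])
    show "{\<omega>\<in>space M. vslice (R T \<omega>) 0 m1 = k} \<in> sets M"
      by (rule sets_Collect_count_space[OF RT_meas])
    assume pos: "0 < measure M (Op \<inter> ?A)"
    moreover have "pmf \<mu> z = measure M (Op \<inter> ?A) / measure M Op"
      using Z0_law by (simp add: cprob_def Int_commute)
    ultimately have "0 < pmf \<mu> z" using Op by simp
    then have "z \<in> set_pmf \<mu>" by (simp add: set_pmf_iff)
    then show "cprob M {\<omega>\<in>space M. vslice (R T \<omega>) 0 m1 = k} (Op \<inter> ?A)
        = mpois m1 (\<lambda>i. LBINT t=0..T. l z t i) k"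
      using pos Op A l by (intro cprob_vslice_endpoint[OF _ _ R_law[OF pos] T RT_meas R0 RT]) auto
  qed
  moreover have "?A \<inter> {\<omega>\<in>space M. vslice (R T \<omega>) 0 m1 = k}
      = {\<omega>\<in>space M. Z0 \<omega> = z \<and> vslice (R T \<omega>) 0 m1 = k}" by auto
  ultimately show ?thesis by simp
qed



lemma (in finite_measure) cprob_filter_draw:
  assumes Op: "Op \<in> sets M" "0 < measure M Op"
    and meas: "U \<in> M \<rightarrow>\<^sub>M count_space UNIV" "V \<in> M \<rightarrow>\<^sub>M count_space UNIV"
      "K \<in> M \<rightarrow>\<^sub>M count_space UNIV"
    and vals: "\<And>\<omega>. \<omega> \<in> space M \<Longrightarrow> U \<omega> \<in> nnvecs n1 \<and> V \<omega> \<in> nnvecs n2"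
    and mu_supp: "set_pmf \<mu> \<subseteq> nnvecs (n1 + n2)"
    and UV_law: "\<And>x v. x \<in> nnvecs n1 \<Longrightarrow> v \<in> nnvecs n2 \<Longrightarrow>
      cprob M {\<omega>\<in>space M. U \<omega> = x \<and> V \<omega> = v} Op = pmf \<mu> (x @\<^sub>v v)"
    and K_law: "\<And>x v. x \<in> nnvecs n1 \<Longrightarrow> v \<in> nnvecs n2 \<Longrightarrow>
      0 < measure M (Op \<inter> {\<omega>\<in>space M. U \<omega> = x \<and> V \<omega> = v}) \<Longrightarrow>
      cprob M {\<omega>\<in>space M. K \<omega> = k} (Op \<inter> {\<omega>\<in>space M. U \<omega> = x \<and> V \<omega> = v}) = q (x @\<^sub>v v)"
  shows "cprob M {\<omega>\<in>space M. U \<omega> @\<^sub>v V \<omega> = z \<and> K \<omega> = k} Op = pmf \<mu> z * q z"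
proof (cases "z \<in> nnvecs (n1 + n2)")
  case False
  then have empty: "{\<omega>\<in>space M. U \<omega> @\<^sub>v V \<omega> = z \<and> K \<omega> = k} = {}"
    using vals append_mem_nnvecs_iff nnvecs_carrier by blast
  have "pmf \<mu> z = 0" using False mu_supp by (auto simp: set_pmf_iff)
  then show ?thesis unfolding cprob_def empty by simp
next
  case True
  define x v where "x = vslice z 0 n1" and "v = vslice z n1 n2"
  have xv: "x \<in> nnvecs n1" "v \<in> nnvecs n2" and z: "z = x @\<^sub>v v"
    using vslice_mem_nnvecs[OF True] vslice_append_split[OF nnvecs_carrier[OF True]]
    by (auto simp: x_def v_def)
  let ?A = "{\<omega>\<in>space M. U \<omega> = x \<and> V \<omega> = v}"
  have "?A \<inter> {\<omega>\<in>space M. K \<omega> = k} = {\<omega>\<in>space M. U \<omega> @\<^sub>v V \<omega> = z \<and> K \<omega> = k}"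
  proof -
    have "U \<omega> @\<^sub>v V \<omega> = x @\<^sub>v v \<longleftrightarrow> U \<omega> = x \<and> V \<omega> = v" if "\<omega> \<in> space M" for \<omega>
      using vals[OF that] append_vec_eq[OF nnvecs_carrier nnvecs_carrier[OF xv(1)]] by blast
    then show ?thesis unfolding z by auto
  qed
  moreover have "cprob M (?A \<inter> {\<omega>\<in>space M. K \<omega> = k}) Op = pmf \<mu> z * q z"
    unfolding z
    by (rule cprob_Int_eq_mult[OF finite_measure_axioms _ _ Op UV_law[OF xv] K_law[OF xv]])
       (intro sets.sets_Collect_conj sets_Collect_count_space[OF meas(1)]
          sets_Collect_count_space[OF meas(2)] sets_Collect_count_space[OF meas(3)])+
  ultimately show ?thesis by simp
qed

lemma (in prob_space) prob_eq_if_point_probs_eq: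
  fixes X Y :: "'a \<Rightarrow> 'b :: countable"
  assumes X: "X \<in> M \<rightarrow>\<^sub>M count_space UNIV" and Y: "Y \<in> M \<rightarrow>\<^sub>M count_space UNIV"
    and points: "\<And>c. prob {\<omega>\<in>space M. X \<omega> = c} = prob {\<omega>\<in>space M. Y \<omega> = c}"
  shows "prob {\<omega>\<in>space M. X \<omega> \<in> A} = prob {\<omega>\<in>space M. Y \<omega> \<in> A}"
proof -
  have "distr M (count_space UNIV) X = distr M (count_space UNIV) Y"
  proof (rule measure_eqI_countable[where A = UNIV])
    fix c :: 'b
    have "X -` {c} \<inter> space M = {\<omega>\<in>space M. X \<omega> = c}" "Y -` {c} \<inter> space M = {\<omega>\<in>space M. Y \<omega> = c}"
      by auto
    then show "emeasure (distr M (count_space UNIV) X) {c} = emeasure (distr M (count_space UNIV) Y) {c}"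
      using points[of c] by (simp add: emeasure_distr X Y emeasure_eq_measure)
  qed auto
  moreover have "X -` A \<inter> space M = {\<omega>\<in>space M. X \<omega> \<in> A}" "Y -` A \<inter> space M = {\<omega>\<in>space M. Y \<omega> \<in> A}"
    by auto
  ultimately show ?thesis
    using measure_distr[OF X, of A] measure_distr[OF Y, of A] by simp
qed

lemma sets_vimage_algebra_path_event:
  fixes Z :: "'a \<Rightarrow> 'b :: countable" and R :: "'i \<Rightarrow> 'a \<Rightarrow> 'c :: countable"
  assumes "t \<in> I"
  shows "{\<omega>\<in>\<Omega>. P (Z \<omega>) (R t \<omega>)}
    \<in> sets (vimage_algebra \<Omega> (\<lambda>\<omega>. (Z \<omega>, restrict (\<lambda>t. R t \<omega>) I))
        (count_space UNIV \<Otimes>\<^sub>M (\<Pi>\<^sub>M t\<in>I. count_space UNIV)))"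
proof -
  let ?N = "count_space UNIV \<Otimes>\<^sub>M (\<Pi>\<^sub>M t\<in>I. count_space UNIV) :: ('b \<times> ('i \<Rightarrow> 'c)) measure"
  have "(\<lambda>p. (fst p, snd p t)) \<in> ?N \<rightarrow>\<^sub>M count_space UNIV \<Otimes>\<^sub>M count_space UNIV"
    using assms by measurable
  then have "{p\<in>space ?N. P (fst p) (snd p t)} \<in> sets ?N"
    using sets_Collect_count_space[of "\<lambda>p. (fst p, snd p t)" ?N "\<lambda>(a, b). P a b"]
    by (simp add: pair_measure_countable)
  from in_vimage_algebra[OF this, of "\<lambda>\<omega>. (Z \<omega>, restrict (\<lambda>t. R t \<omega>) I)" \<Omega>]
  show ?thesis using assms by (simp add: vimage_def Int_def space_pair_measure space_PiM conj_commute)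
qed

lemma observation_mem_Sset:
  assumes dims: "n2 = m2" and B_inv: "invertible_mat (map_mat rat_of_int (Bmat n1 n2 m1 m2 \<nu>))"
    and r: "r \<in> nnvecs (m1 + m2)" and obs: "vslice z n1 n2 + nu2 n1 n2 (m1 + m2) \<nu> *\<^sub>v r = y"
  shows "vslice r 0 m1 \<in> Sset n1 n2 m1 m2 \<nu> (y - vslice z n1 n2)"
proof -
  have "y - vslice z n1 n2 = nu2 n1 n2 (m1 + m2) \<nu> *\<^sub>v r"
    unfolding obs[symmetric] by (intro eq_vecI) (auto simp: vslice_def nu2_def mslice_def)
  then show ?thesis using vslice_mem_Sset[OF dims B_inv r] by simp
qed


lemma measurable_pair_count_space:
  fixes X :: "'a \<Rightarrow> 'b :: countable" and Y :: "'a \<Rightarrow> 'c :: countable"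
  assumes "X \<in> M \<rightarrow>\<^sub>M count_space UNIV" "Y \<in> M \<rightarrow>\<^sub>M count_space UNIV"
  shows "(\<lambda>\<omega>. (X \<omega>, Y \<omega>)) \<in> M \<rightarrow>\<^sub>M count_space UNIV"
  using measurable_Pair[OF assms] by (simp add: pair_measure_countable)

lemma interval_integral_nonneg_Icc:
  fixes f :: "real \<Rightarrow> real"
  assumes "0 \<le> T" "\<And>t. t \<in> {0..T} \<Longrightarrow> 0 \<le> f t"
  shows "0 \<le> (LBINT t=0..T. f t)"
proof -
  have "0 \<le> (LBINT t:{0..T}. f t)"
    unfolding set_lebesgue_integral_def using assms(2)
    by (intro integral_nonneg_AE AE_I2) (auto simp: indicator_def)
  then show ?thesis using assms(1) interval_integral_Icc[of 0 T f] by (simp add: zero_ereal_def)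
qed

lemma cprob_Int_conv_uniform_measure:
  assumes C: "emeasure M C \<noteq> 0" "emeasure M C \<noteq> \<infinity>" and sets: "A \<in> sets M" "B \<in> sets M"
  shows "cprob M A (C \<inter> B) = measure (uniform_measure M C) (A \<inter> B) / measure (uniform_measure M C) B"
proof -
  have "0 < measure M C"
    using C by (simp add: measure_def enn2real_positive_iff less_top[symmetric] zero_less_iff_neq_zero)
  then show ?thesis
    using sets by (simp add: measure_uniform_measure[OF C] cprob_def Int_ac)
qed

theorem proposition1:
  fixes n1 n2 m1 m2 :: nat and T :: real and y :: "int vec" and \<nu> :: "int mat"
    and lam :: "real \<Rightarrow> int vec \<Rightarrow> int vec \<Rightarrow> nat \<Rightarrow> real"
    and \<mu> :: "int vec pmf"
    and M :: "'a measure" and Z0 :: "'a \<Rightarrow> int vec" and R :: "real \<Rightarrow> 'a \<Rightarrow> int vec"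
    and Op :: "'a set"
    and U0 V0 Kp :: "nat \<Rightarrow> 'a \<Rightarrow> int vec"
    and z0 k' :: "int vec"
  assumes dims: "n2 = m2"
    and T_pos: "T > 0"
    and y_in: "y \<in> nnvecs n2"
    and nu_dim: "\<nu> \<in> carrier_mat (n1 + n2) (m1 + m2)"
    and B_inv: "invertible_mat (map_mat rat_of_int (Bmat n1 n2 m1 m2 \<nu>))"
    and lam_pos: "\<And>t z yy i. t \<in> {0..T} \<Longrightarrow> z \<in> nnvecs (n1 + n2) \<Longrightarrow> yy \<in> nnvecs n2 \<Longrightarrow>
                    i < m1 + m2 \<Longrightarrow> lam t z yy i > 0"
    and lam_meas: "\<And>z yy i. z \<in> nnvecs (n1 + n2) \<Longrightarrow> yy \<in> nnvecs n2 \<Longrightarrow> i < m1 + m2 \<Longrightarrow>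
                    (\<lambda>t. lam t z yy i) \<in> borel_measurable (restrict_space lborel {0..T})"
    and lam_int: "\<And>z yy i. z \<in> nnvecs (n1 + n2) \<Longrightarrow> yy \<in> nnvecs n2 \<Longrightarrow> i < m1 + m2 \<Longrightarrow>
                    set_integrable lborel {0..T} (\<lambda>t. lam t z yy i)"
    and mu_supp: "set_pmf \<mu> \<subseteq> nnvecs (n1 + n2)"
    and M_prob: "prob_space M"
    and Op_ev: "Op \<in> sets M"
    and Op_pos: "measure M Op > 0"
    and Z0_meas: "Z0 \<in> measurable M (count_space UNIV)"
    and Z0_vals: "\<And>\<omega>. \<omega> \<in> space M \<Longrightarrow> Z0 \<omega> \<in> nnvecs (n1 + n2)"
    and R_meas: "\<And>t. t \<in> {0..T} \<Longrightarrow> R t \<in> measurable M (count_space UNIV)"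
    and R_paths: "\<And>\<omega>. \<omega> \<in> space M \<Longrightarrow> counting_path (m1 + m2) T (\<lambda>t. R t \<omega>)"
    and Z0_law: "\<And>z. cprob M {\<omega>\<in>space M. Z0 \<omega> = z} Op = pmf \<mu> z"
    and R_law: "\<And>z. measure M (Op \<inter> {\<omega>\<in>space M. Z0 \<omega> = z}) > 0 \<Longrightarrow>
                  inhom_poisson M (Op \<inter> {\<omega>\<in>space M. Z0 \<omega> = z}) (m1 + m2) T R
                    (\<lambda>t i. lam t z y i)"
    and O_pos: "measure M (Op \<inter> {\<omega>\<in>space M.
                   vslice (Z0 \<omega>) n1 n2 + nu2 n1 n2 (m1 + m2) \<nu> *\<^sub>v R T \<omega> = y}) > 0"
    and filt_meas: "\<And>i. U0 i \<in> measurable M (count_space UNIV) \<and>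
                         V0 i \<in> measurable M (count_space UNIV) \<and>
                         Kp i \<in> measurable M (count_space UNIV)"
    and filt_vals: "\<And>i \<omega>. \<omega> \<in> space M \<Longrightarrow>
                      U0 i \<omega> \<in> nnvecs n1 \<and> V0 i \<omega> \<in> nnvecs n2 \<and> Kp i \<omega> \<in> nnvecs m1"
    and filt_indep: "prob_space.indep_sets (uniform_measure M Op)
                (\<lambda>j. case j of
                   Some i \<Rightarrow> sets (vimage_algebra (space M) (\<lambda>\<omega>. (U0 i \<omega>, V0 i \<omega>, Kp i \<omega>))
                                    (count_space UNIV))
                 | None \<Rightarrow> sets (vimage_algebra (space M) (\<lambda>\<omega>. (Z0 \<omega>, restrict (\<lambda>t. R t \<omega>) {0..T}))
                                    (count_space UNIV \<Otimes>\<^sub>M (\<Pi>\<^sub>M t\<in>{0..T}. count_space UNIV))))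
                UNIV"
    and UV_law: "\<And>i x v. x \<in> nnvecs n1 \<Longrightarrow> v \<in> nnvecs n2 \<Longrightarrow>
                   cprob M {\<omega>\<in>space M. U0 i \<omega> = x \<and> V0 i \<omega> = v} Op = pmf \<mu> (x @\<^sub>v v)"
    and K_law: "\<And>i x v k. x \<in> nnvecs n1 \<Longrightarrow> v \<in> nnvecs n2 \<Longrightarrow>
                   measure M (Op \<inter> {\<omega>\<in>space M. U0 i \<omega> = x \<and> V0 i \<omega> = v}) > 0 \<Longrightarrow>
                   cprob M {\<omega>\<in>space M. Kp i \<omega> = k} (Op \<inter> {\<omega>\<in>space M. U0 i \<omega> = x \<and> V0 i \<omega> = v})
                   = mpois m1 (\<lambda>j. LBINT t=0..T. lam t (x @\<^sub>v v) y j) k"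
    and z0_in: "z0 \<in> nnvecs (n1 + n2)"
    and k'_in: "k' \<in> nnvecs m1"
  shows "cprob M
           {\<omega>\<in>space M.
              (let N = (LEAST i. Kp i \<omega> \<in> Sset n1 n2 m1 m2 \<nu> (y - V0 i \<omega>))
               in U0 N \<omega> @\<^sub>v V0 N \<omega> = z0 \<and> Kp N \<omega> = k')}
           (Op \<inter> {\<omega>\<in>space M. vslice (Z0 \<omega>) n1 n2 + nu2 n1 n2 (m1 + m2) \<nu> *\<^sub>v R T \<omega> = y})
         = indicator (Sset n1 n2 m1 m2 \<nu> (y - vslice z0 n1 n2)) k'
           * cprob M {\<omega>\<in>space M. Z0 \<omega> = z0 \<and> vslice (R T \<omega>) 0 m1 = k'} Op
           / cprob M {\<omega>\<in>space M. vslice (R T \<omega>) 0 m1 \<in> Sset n1 n2 m1 m2 \<nu> (y - vslice (Z0 \<omega>) n1 n2)} Op"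
proof -
  interpret M: prob_space M by (rule M_prob)
  have T: "0 \<le> T" using T_pos by simp
  have R0: "\<And>\<omega>. \<omega> \<in> space M \<Longrightarrow> R 0 \<omega> = 0\<^sub>v (m1 + m2)"
    and RT: "\<And>\<omega>. \<omega> \<in> space M \<Longrightarrow> R T \<omega> \<in> nnvecs (m1 + m2)"
    using counting_path_endpoints[OF R_paths T] by auto
  have RT_meas: "R T \<in> M \<rightarrow>\<^sub>M count_space UNIV" using R_meas T by simp
  have Op_emeasure: "emeasure M Op \<noteq> 0" "emeasure M Op \<noteq> \<infinity>"
    using Op_pos by (auto simp: M.emeasure_eq_measure)
  define P where "P = uniform_measure M Op"
  interpret P: prob_space P unfolding P_def by (rule prob_space_uniform_measure[OF Op_emeasure])
  have P_sets: "sets P = sets M" "space P = space M" by (simp_all add: P_def)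
  have P_prob: "P.prob A = cprob M A Op" if "A \<in> sets M" for A
    using that Op_pos by (simp add: P_def cprob_def measure_uniform_measure[OF Op_emeasure] Int_commute)
  define X where "X = (\<lambda>i \<omega>. (U0 i \<omega>, V0 i \<omega>, Kp i \<omega>))"
  define W where "W = (\<lambda>i \<omega>. (U0 i \<omega> @\<^sub>v V0 i \<omega>, Kp i \<omega>))"
  define Y where "Y = (\<lambda>\<omega>. (Z0 \<omega>, vslice (R T \<omega>) 0 m1))"
  have X_meas: "X i \<in> M \<rightarrow>\<^sub>M count_space UNIV" for i
    unfolding X_def using filt_meas by (intro measurable_pair_count_space) auto
  have W_meas: "W i \<in> P \<rightarrow>\<^sub>M count_space UNIV" for i
    using measurable_compose[OF X_meas measurable_count_space, of "\<lambda>(u, v, k). (u @\<^sub>v v, k)" i]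
    by (simp add: W_def X_def P_def measurable_cong_sets[OF sets_uniform_measure refl] case_prod_beta)
  have Y_meas: "Y \<in> P \<rightarrow>\<^sub>M count_space UNIV"
    unfolding Y_def P_def measurable_cong_sets[OF sets_uniform_measure refl]
    by (intro measurable_pair_count_space Z0_meas measurable_compose[OF RT_meas measurable_count_space])
  have Y_events: "{\<omega>\<in>space M. Q (Y \<omega>)} \<in> sets M" for Q
    using sets_Collect_count_space[OF Y_meas] by (simp add: P_sets)
  have W_events: "{\<omega>\<in>space M. Q (W i \<omega>)} \<in> sets M" for i Q
    using sets_Collect_count_space[OF W_meas] by (simp add: P_sets)
  have same_law: "P.prob {\<omega>\<in>space M. W i \<omega> \<in> A} = P.prob {\<omega>\<in>space M. Y \<omega> \<in> A}" for i A
  proof -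
    have "P.prob {\<omega>\<in>space P. W i \<omega> = c} = P.prob {\<omega>\<in>space P. Y \<omega> = c}" for c
    proof -
      obtain z k where c: "c = (z, k)" by (cases c)
      have "cprob M {\<omega>\<in>space M. U0 i \<omega> @\<^sub>v V0 i \<omega> = z \<and> Kp i \<omega> = k} Op
          = pmf \<mu> z * mpois m1 (\<lambda>j. LBINT t=0..T. lam t z y j) k"
        using filt_meas filt_vals
        by (intro M.cprob_filter_draw[OF Op_ev Op_pos _ _ _ _ mu_supp UV_law K_law]) auto
      moreover have "cprob M {\<omega>\<in>space M. Z0 \<omega> = z \<and> vslice (R T \<omega>) 0 m1 = k} Op
          = pmf \<mu> z * mpois m1 (\<lambda>j. LBINT t=0..T. lam t z y j) k"
        using mu_supp y_in lam_pos T_pos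
        by (intro M.cprob_initial_and_partial_count[where l = "\<lambda>z t i. lam t z y i",
              OF Op_ev Op_pos Z0_meas RT_meas T R0 RT Z0_law R_law] interval_integral_nonneg_Icc
              less_imp_le) auto
      ultimately show ?thesis
        using W_events[of "\<lambda>w. w = (z, k)" i] Y_events[of "\<lambda>w. w = (z, k)"]
        by (simp add: W_def Y_def P_prob P_sets c)
    qed
    from P.prob_eq_if_point_probs_eq[OF W_meas Y_meas this] show ?thesis by (simp add: P_sets)
  qed
  define S where "S = {(u :: int vec, v, k). k \<in> Sset n1 n2 m1 m2 \<nu> (y - v)}"
  define F where "F = {(u :: int vec, v, k :: int vec). u @\<^sub>v v = z0 \<and> k = k'}"
  define Oy where "Oy = {\<omega>\<in>space M. vslice (Z0 \<omega>) n1 n2 + nu2 n1 n2 (m1 + m2) \<nu> *\<^sub>v R T \<omega> = y}"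
  define Dset where "Dset = {\<omega>\<in>space M. vslice (R T \<omega>) 0 m1 \<in> Sset n1 n2 m1 m2 \<nu> (y - vslice (Z0 \<omega>) n1 n2)}"
  define Hset where "Hset = {\<omega>\<in>space M. Z0 \<omega> = z0 \<and> vslice (R T \<omega>) 0 m1 = k'}"
  define ind where "ind = (indicator (Sset n1 n2 m1 m2 \<nu> (y - vslice z0 n1 n2)) k' :: real)"
  have ZR_events: "{\<omega>\<in>space M. Q (Z0 \<omega>) (R T \<omega>)} \<in> sets M" for Q
    using sets_Collect_count_space[OF measurable_pair_count_space[OF Z0_meas RT_meas], of "case_prod Q"]
    by simp
  have Oy_ev: "Oy \<in> sets M" and Dset_ev: "Dset \<in> sets M" and Hset_ev: "Hset \<in> sets M"
    unfolding Oy_def Dset_def Hset_def by (rule ZR_events)+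
  have V_slice: "vslice (U0 i \<omega> @\<^sub>v V0 i \<omega>) n1 n2 = V0 i \<omega>" if "\<omega> \<in> space M" for i \<omega>
    using filt_vals[OF that] by (simp add: vslice_append_right nnvecs_carrier)
  have hit: "P.prob {\<omega>\<in>space P. X i \<omega> \<in> S} = cprob M Dset Op" for i
  proof -
    let ?A = "{(z, k). k \<in> Sset n1 n2 m1 m2 \<nu> (y - vslice z n1 n2)}"
    have "{\<omega>\<in>space P. X i \<omega> \<in> S} = {\<omega>\<in>space M. W i \<omega> \<in> ?A}"
      unfolding P_sets by (rule Collect_cong) (simp add: X_def S_def W_def V_slice cong: conj_cong)
    also have "P.prob \<dots> = P.prob {\<omega>\<in>space M. Y \<omega> \<in> ?A}" by (rule same_law)
    also have "{\<omega>\<in>space M. Y \<omega> \<in> ?A} = Dset" by (auto simp: Dset_def Y_def)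
    also have "P.prob Dset = cprob M Dset Op" by (rule P_prob[OF Dset_ev])
    finally show ?thesis .
  qed
  have hit_in: "P.prob {\<omega>\<in>space P. X i \<omega> \<in> S \<inter> F} = ind * cprob M Hset Op" for i
  proof -
    let ?A = "{(z, k). k \<in> Sset n1 n2 m1 m2 \<nu> (y - vslice z n1 n2) \<and> z = z0 \<and> k = k'}"
    have "{\<omega>\<in>space P. X i \<omega> \<in> S \<inter> F} = {\<omega>\<in>space M. W i \<omega> \<in> ?A}"
      unfolding P_sets by (rule Collect_cong) (auto simp: X_def S_def F_def W_def V_slice cong: conj_cong)
    also have "P.prob \<dots> = P.prob {\<omega>\<in>space M. Y \<omega> \<in> ?A}" by (rule same_law)
    also have "{\<omega>\<in>space M. Y \<omega> \<in> ?A} = (if k' \<in> Sset n1 n2 m1 m2 \<nu> (y - vslice z0 n1 n2) then Hset else {})"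
      by (auto simp: Y_def Hset_def)
    also have "P.prob \<dots> = ind * cprob M Hset Op"
      by (simp add: ind_def P_prob[OF Hset_ev])
    finally show ?thesis .
  qed
  have Oy_sub: "Oy \<subseteq> Dset"
    using observation_mem_Sset[OF dims B_inv RT] by (auto simp: Oy_def Dset_def)
  have Oy_pos: "0 < P.prob Oy"
    using O_pos Op_pos unfolding P_prob[OF Oy_ev] cprob_def by (simp add: Oy_def Int_commute)
  have D_pos: "0 < cprob M Dset Op"
    using P.finite_measure_mono[OF Oy_sub] Oy_pos Dset_ev by (simp add: P_sets P_prob[OF Dset_ev])
  have indep: "P.indep_sets (\<lambda>j. case j of
        Some i \<Rightarrow> sets (vimage_algebra (space P) (X i) (count_space UNIV))
      | None \<Rightarrow> sets (vimage_algebra (space M) (\<lambda>\<omega>. (Z0 \<omega>, restrict (\<lambda>t. R t \<omega>) {0..T}))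
          (count_space UNIV \<Otimes>\<^sub>M (\<Pi>\<^sub>M t\<in>{0..T}. count_space UNIV)))) UNIV"
    using filt_indep unfolding P_def X_def by (simp only: space_uniform_measure)
  have Oy_indep: "Oy \<in> sets (vimage_algebra (space M) (\<lambda>\<omega>. (Z0 \<omega>, restrict (\<lambda>t. R t \<omega>) {0..T}))
      (count_space UNIV \<Otimes>\<^sub>M (\<Pi>\<^sub>M t\<in>{0..T}. count_space UNIV)))"
    unfolding Oy_def using T by (intro sets_vimage_algebra_path_event) auto
  have X_meas_P: "X i \<in> P \<rightarrow>\<^sub>M count_space UNIV" for i
    using X_meas by (simp add: P_def measurable_cong_sets[OF sets_uniform_measure refl])
  define E where "E = {\<omega>\<in>space M.
    (let N = (LEAST i. Kp i \<omega> \<in> Sset n1 n2 m1 m2 \<nu> (y - V0 i \<omega>)) in U0 N \<omega> @\<^sub>v V0 N \<omega> = z0 \<and> Kp N \<omega> = k')}"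
  have E_eq: "E = {\<omega>\<in>space M. X (LEAST i. X i \<omega> \<in> S) \<omega> \<in> F}"
    by (simp add: E_def X_def S_def F_def Let_def)
  have "P.prob (E \<inter> Oy) = ind * cprob M Hset Op * P.prob Oy / cprob M Dset Op"
    unfolding E_eq using P.prob_first_hit_Int[OF X_meas_P indep Oy_indep hit D_pos hit_in]
    by (simp add: P_sets)
  moreover have "cprob M E (Op \<inter> Oy) = P.prob (E \<inter> Oy) / P.prob Oy"
    unfolding P_def using Op_emeasure Oy_ev sets_first_hit[OF X_meas]
    by (intro cprob_Int_conv_uniform_measure) (auto simp: E_eq)
  ultimately show ?thesis
    using Oy_pos by (simp add: E_def Oy_def Hset_def Dset_def ind_def)
qed

end
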